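(* Let $N, P, T$ be positive integers and let $0 < a < 1$, $b > 0$, $\epsilon > 0$. For $t = 1, \dots, T$ let $A(t) \in \mathbb{R}^{N \times N}$ satisfy $\|A(t)\|_2 \le a \cdot e^{t-T}$, let $B \in \mathbb{R}^{N \times P}$ satisfy $\|B\|_2 \le b$, let $x(t) \in \mathbb{R}^{P \times 1}$ be arbitrary inputs, and let $\delta_x(t) \in \mathbb{R}^{P \times 1}$ satisfy $\|\delta_x(t)\|_2 \le \epsilon$; set $\overline{x}(t) = x(t) + \delta_x(t)$. Define the state sequences $h(t), \overline{h}(t) \in \mathbb{R}^{N \times 1}$ by $h(0) = \overline{h}(0) = 0$ and, for $1 \le t \le T$, $$h(t) = A(t)\, h(t-1) + B\, x(t), \qquad \overline{h}(t) = A(t)\, \overline{h}(t-1) + B\, \overline{x}(t).$$ Let $\Delta(t) = \overline{h}(t) - h(t)$. Then for every $1 \le t \le T$, $$\|\Delta(t)\|_2 \le \epsilon b \left( \frac{1}{1 - a e^{t-T}} \right),$$ and consequently $\|\Delta(T)\|_2 \le \dfrac{\epsilon b}{1-a}$.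
   Context: $\|\cdot\|_2$ denotes the Euclidean norm for vectors and the spectral norm (operator 2-norm) for matrices. The sequence $\overline{h}$ models the state of the recurrence when the input at each step carries a quantization error $\delta_x(t)$. *)

theory Defs
  imports "HOL-Analysis.Analysis"
begin

definition spec_norm :: "real^'m^'n \<Rightarrow> real" where
  "spec_norm M = onorm (\<lambda>v. M *v v)"

primrec state_seq :: "(nat \<Rightarrow> real^'n^'n) \<Rightarrow> real^'p^'n \<Rightarrow> (nat \<Rightarrow> real^'p) \<Rightarrow> nat \<Rightarrow> real^'n" where
  "state_seq A B u 0 = 0"
| "state_seq A B u (Suc t) = A (Suc t) *v state_seq A B u t + B *v u (Suc t)"

end

theory Submission
  imports Defs
begin

text \<open>By linearity of the recurrence, \<open>\<Delta>\<close> is itself the state sequence driven by the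
  input errors \<open>\<delta>\<close>. Each step multiplies its norm by at most \<open>\<alpha>(t) = a exp (t - T)\<close> and adds
  at most \<open>\<epsilon> b\<close>. Since \<open>\<alpha>\<close> is nondecreasing, the bound \<open>\<epsilon> b / (1 - \<alpha>(t))\<close> propagates:
  \<open>\<alpha>(t+1) \<epsilon> b / (1 - \<alpha>(t)) + \<epsilon> b \<le> \<alpha>(t+1) \<epsilon> b / (1 - \<alpha>(t+1)) + \<epsilon> b = \<epsilon> b / (1 - \<alpha>(t+1))\<close>.\<close>

lemma norm_mult_vec_le_spec_norm: "norm (M *v v) \<le> spec_norm M * norm v"
  unfolding spec_norm_def by (rule onorm) (rule matrix_vector_mul_bounded_linear)

lemma spec_norm_nonneg: "0 \<le> spec_norm M"
  unfolding spec_norm_def by (rule onorm_pos_le) (rule matrix_vector_mul_bounded_linear)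

lemma state_seq_add_input:
  "state_seq A B (\<lambda>s. u s + w s) t = state_seq A B u t + state_seq A B w t"
  by (induction t) (simp_all add: matrix_vector_right_distrib algebra_simps)

lemma recurrence_le_fixed_point_bound:
  fixes d \<alpha> :: "nat \<Rightarrow> real"
  assumes "d 0 = 0" and "0 \<le> c"
    and \<alpha>_range: "\<And>t. t \<le> T \<Longrightarrow> 0 \<le> \<alpha> t \<and> \<alpha> t < 1"
    and \<alpha>_mono: "\<And>t. t < T \<Longrightarrow> \<alpha> t \<le> \<alpha> (Suc t)"
    and step: "\<And>t. t < T \<Longrightarrow> d (Suc t) \<le> \<alpha> (Suc t) * d t + c"
  shows "t \<le> T \<Longrightarrow> d t \<le> c / (1 - \<alpha> t)"
proof (induction t)
  case 0
  then show ?case using assms(1,2) \<alpha>_range[of 0] by simp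
next
  case (Suc t)
  have \<alpha>_t: "\<alpha> t < 1" and \<alpha>_Suc: "0 \<le> \<alpha> (Suc t)" "\<alpha> (Suc t) < 1"
    using \<alpha>_range Suc.prems by auto
  have "d (Suc t) \<le> \<alpha> (Suc t) * d t + c"
    using step Suc.prems by simp
  also have "\<dots> \<le> \<alpha> (Suc t) * (c / (1 - \<alpha> t)) + c"
    using Suc \<alpha>_Suc by (intro add_right_mono mult_left_mono) auto
  also have "\<dots> \<le> \<alpha> (Suc t) * (c / (1 - \<alpha> (Suc t))) + c"
    using \<alpha>_mono[of t] Suc.prems \<alpha>_t \<alpha>_Suc \<open>0 \<le> c\<close>
    by (intro add_right_mono mult_left_mono divide_left_mono) auto
  also have "\<dots> = c / (1 - \<alpha> (Suc t))"
    using \<alpha>_Suc by (simp add: field_simps)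
  finally show ?case .
qed

lemma norm_state_seq_le:
  assumes "0 \<le> \<epsilon>" and "spec_norm B \<le> b"
    and "\<And>t. 1 \<le> t \<Longrightarrow> t \<le> T \<Longrightarrow> norm (u t) \<le> \<epsilon>"
    and "\<And>t. 1 \<le> t \<Longrightarrow> t \<le> T \<Longrightarrow> spec_norm (A t) \<le> \<alpha> t"
    and "\<And>t. t \<le> T \<Longrightarrow> 0 \<le> \<alpha> t \<and> \<alpha> t < 1"
    and "\<And>t. t < T \<Longrightarrow> \<alpha> t \<le> \<alpha> (Suc t)"
    and "t \<le> T"
  shows "norm (state_seq A B u t) \<le> \<epsilon> * b / (1 - \<alpha> t)"
proof (rule recurrence_le_fixed_point_bound[where d = "\<lambda>t. norm (state_seq A B u t)"])
  show "0 \<le> \<epsilon> * b"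
    using assms(1,2) spec_norm_nonneg[of B] by simp
  fix s assume "s < T"
  then have s: "1 \<le> Suc s" "Suc s \<le> T" by simp_all
  have "norm (A (Suc s) *v state_seq A B u s)
      \<le> spec_norm (A (Suc s)) * norm (state_seq A B u s)"
    by (rule norm_mult_vec_le_spec_norm)
  also have "\<dots> \<le> \<alpha> (Suc s) * norm (state_seq A B u s)"
    using assms(4)[OF s] by (rule mult_right_mono) simp
  finally have A_term:
    "norm (A (Suc s) *v state_seq A B u s) \<le> \<alpha> (Suc s) * norm (state_seq A B u s)" .
  have "norm (B *v u (Suc s)) \<le> spec_norm B * norm (u (Suc s))"
    by (rule norm_mult_vec_le_spec_norm)
  also have "\<dots> \<le> b * \<epsilon>"
    using assms(2) assms(3)[OF s] spec_norm_nonneg[of B] by (intro mult_mono) auto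
  finally have B_term: "norm (B *v u (Suc s)) \<le> \<epsilon> * b"
    by (simp add: mult.commute)
  show "norm (state_seq A B u (Suc s)) \<le> \<alpha> (Suc s) * norm (state_seq A B u s) + \<epsilon> * b"
    using norm_triangle_le[OF add_mono[OF A_term B_term]] by simp
qed (use assms in auto)

theorem mainTheorem1:
  fixes T :: nat and a b \<epsilon> :: real
    and A :: "nat \<Rightarrow> real^'n::finite^'n"
    and B :: "real^'p::finite^'n"
    and x \<delta> :: "nat \<Rightarrow> real^'p"
  assumes "T \<ge> 1" and "0 < a" and "a < 1" and "b > 0" and "\<epsilon> > 0"
    and "\<And>t. 1 \<le> t \<Longrightarrow> t \<le> T \<Longrightarrow> spec_norm (A t) \<le> a * exp (real t - real T)"
    and "spec_norm B \<le> b"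
    and "\<And>t. 1 \<le> t \<Longrightarrow> t \<le> T \<Longrightarrow> norm (\<delta> t) \<le> \<epsilon>"
  shows "(\<forall>t. 1 \<le> t \<and> t \<le> T \<longrightarrow>
            norm (state_seq A B (\<lambda>s. x s + \<delta> s) t - state_seq A B x t)
              \<le> \<epsilon> * b * (1 / (1 - a * exp (real t - real T))))
       \<and> norm (state_seq A B (\<lambda>s. x s + \<delta> s) T - state_seq A B x T) \<le> \<epsilon> * b / (1 - a)"
proof -
  define \<alpha> where "\<alpha> t = a * exp (real t - real T)" for t
  have "0 \<le> \<alpha> t \<and> \<alpha> t < 1" if "t \<le> T" for t
  proof -
    have "\<alpha> t \<le> a"
      using that \<open>0 < a\<close> by (simp add: \<alpha>_def mult_left_le)
    moreover have "0 \<le> \<alpha> t"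
      using \<open>0 < a\<close> by (simp add: \<alpha>_def)
    ultimately show ?thesis using \<open>a < 1\<close> by linarith
  qed
  moreover have "\<alpha> t \<le> \<alpha> (Suc t)" for t
    using \<open>0 < a\<close> by (simp add: \<alpha>_def)
  ultimately have bound: "norm (state_seq A B \<delta> t) \<le> \<epsilon> * b / (1 - \<alpha> t)" if "t \<le> T" for t
    using norm_state_seq_le[of \<epsilon> B b T \<delta> A \<alpha> t] assms that by (simp add: \<alpha>_def)
  have "\<alpha> T = a" by (simp add: \<alpha>_def)
  then show ?thesis
    using bound[of T] bound by (simp add: state_seq_add_input \<alpha>_def)
qed

end
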